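(* In the setting of the context, for $\sigma\in\left]0,1\right]$ the orthogonal complement of $\mathcal K_0(\sigma)$ in $L^2([0,\sigma];\mathbb R^n)$ with respect to the inner product $\mathcal R_\sigma$ is $\mathcal K_0(\sigma)^\perp=\{h'\cdot A[Y]+2h\cdot A[Y'] : h\in H^1([0,\sigma];\mathbb R)\}$.
   Context: $g$ is a nondegenerate symmetric bilinear form on $\mathbb R^n$ of index $1$, and $Y:[0,1]\to\mathbb R^n$ is a $C^2$ map with $g(Y(t),Y(t))<0$ for all $t$. Define positive definite inner products $g^{(r)}_t(V,W)=g(V,W)-2\,g(V,Y(t))g(W,Y(t))/g(Y(t),Y(t))$ on $\mathbb R^n$, and let $A(t)$ be the $g^{(r)}_t$-symmetric operator with $g(V,W)=g^{(r)}_t(A(t)[V],W)$ for all $V,W$. On $L^2([0,\sigma];\mathbb R^n)$ use the inner product $\mathcal R_\sigma(V,W)=\int_0^\sigma g^{(r)}_t(V,W)\,dt$. $\mathcal K_0(\sigma)$ is the closed subspace of $V\in L^2([0,\sigma];\mathbb R^n)$ such that $g(V(t),Y(t))=2\int_0^t g(V,Y')\,ds$ for a.e. $t\in[0,\sigma]$ and $\int_0^\sigma g(V,Y')\,ds=0$. In the formula, $A[Y]$ and $A[Y']$ denote the functions $t\mapsto A(t)[Y(t)]$ and $t\mapsto A(t)[Y'(t)]$. *)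

theory Defs
  imports "HOL-Analysis.Analysis"
begin

definition nondeg_sym_bilinear :: "('a::euclidean_space \<Rightarrow> 'a \<Rightarrow> real) \<Rightarrow> bool" where
  "nondeg_sym_bilinear g \<longleftrightarrow> bilinear g \<and> (\<forall>x y. g x y = g y x) \<and>
     (\<forall>x. (\<forall>y. g x y = 0) \<longrightarrow> x = 0)"

definition form_index :: "('a::euclidean_space \<Rightarrow> 'a \<Rightarrow> real) \<Rightarrow> nat" where
  "form_index g = (GREATEST k. \<exists>W. subspace W \<and> dim W = k \<and>
                     (\<forall>x\<in>W. x \<noteq> 0 \<longrightarrow> g x x < 0))"

definition gr :: "('a \<Rightarrow> 'a \<Rightarrow> real) \<Rightarrow> (real \<Rightarrow> 'a) \<Rightarrow> real \<Rightarrow> 'a \<Rightarrow> 'a \<Rightarrow> real" where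
  "gr g Y t v w = g v w - 2 * g v (Y t) * g w (Y t) / g (Y t) (Y t)"

text \<open>L^2([0,\<sigma>]) membership (functions, to be read modulo a.e. equality).\<close>
definition L2 :: "real \<Rightarrow> (real \<Rightarrow> 'a::euclidean_space) \<Rightarrow> bool" where
  "L2 \<sigma> V \<longleftrightarrow> V \<in> borel_measurable (lebesgue_on {0..\<sigma>}) \<and>
      integrable (lebesgue_on {0..\<sigma>}) (\<lambda>t. (norm (V t))\<^sup>2)"

text \<open>h \<in> H^1([0,\<sigma>];R) with weak derivative h' \<in> L^2 (absolutely continuous representative).\<close>
definition H1 :: "real \<Rightarrow> (real \<Rightarrow> real) \<Rightarrow> (real \<Rightarrow> real) \<Rightarrow> bool" where
  "H1 \<sigma> h h' \<longleftrightarrow> L2 \<sigma> h' \<and>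
      (\<forall>t\<in>{0..\<sigma>}. h t = h 0 + integral\<^sup>L (lebesgue_on {0..t}) h')"

definition Rsig :: "('a \<Rightarrow> 'a \<Rightarrow> real) \<Rightarrow> (real \<Rightarrow> 'a) \<Rightarrow> real \<Rightarrow> (real \<Rightarrow> 'a) \<Rightarrow> (real \<Rightarrow> 'a) \<Rightarrow> real" where
  "Rsig g Y \<sigma> V W = integral\<^sup>L (lebesgue_on {0..\<sigma>}) (\<lambda>t. gr g Y t (V t) (W t))"

definition K0 :: "('a::euclidean_space \<Rightarrow> 'a \<Rightarrow> real) \<Rightarrow> (real \<Rightarrow> 'a) \<Rightarrow> (real \<Rightarrow> 'a) \<Rightarrow> real \<Rightarrow> (real \<Rightarrow> 'a) set" where
  "K0 g Y Y' \<sigma> = {V. L2 \<sigma> V \<and>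
      (AE t in lebesgue_on {0..\<sigma>}. g (V t) (Y t) = 2 * integral\<^sup>L (lebesgue_on {0..t}) (\<lambda>s. g (V s) (Y' s))) \<and>
      integral\<^sup>L (lebesgue_on {0..\<sigma>}) (\<lambda>s. g (V s) (Y' s)) = 0}"

end

theory Submission
  imports Defs
begin

(*
  Put N = g(Y,Y) < 0 and let R_t be the g-reflection in the hyperplane Y(t)^perp,
  R_t x = x - 2 g(x,Y)/N Y.  Then g^(r)_t(v,w) = g(R_t v, w); as R_t is an involution and
  g^(r)_t is positive definite (vectors g-orthogonal to a timelike vector are spacelike when
  the index is one), the operator A(t) is R_t.

  Inclusion "supseteq": if R V = h' Y + 2 h Y' and W is in K_0, then with Phi the primitive
  of g(W,Y'), R_sigma(V,W) = int 2 (h' Phi + h Phi') = 2 h(sigma) Phi(sigma) = 0.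

  Inclusion "subseteq": for V orthogonal to K_0 we split U = R V = h' Y + 2 h Y' + D with D
  pointwise orthogonal to Y, where h = (c + int g(U,Y))/N solves h' = alpha - 2 gamma h.
  The test field W = D + 2 Psi Y (Psi the primitive of g(D,Z)/N, Z the part of Y' orthogonal
  to Y) lies in K_0 for a suitable constant c, and R_sigma(V,W) = int g(D,D).  Since D is
  spacelike, D = 0 almost everywhere.
*)

section \<open>General facts: integrals on intervals\<close>

lemma measurable_id_lebesgue_on[measurable]: "(\<lambda>x::real. x) \<in> borel_measurable (lebesgue_on S)"
  by (simp add: measurable_completion measurable_restrict_space1)

lemma continuous_on_Icc_measurable:
  "continuous_on {a..b} f \<Longrightarrow> f \<in> borel_measurable (lebesgue_on {a..b::real})"
  by (rule continuous_imp_measurable_on_sets_lebesgue) auto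

text \<open>An integral over \<open>[0,t] \<subseteq> [0,s]\<close> is an integral over \<open>[0,s]\<close> against an indicator, so
  that all indefinite integrals can be handled on the single finite measure space \<open>[0,s]\<close>.\<close>
lemma integral_Icc_as_indicator:
  fixes k :: "real \<Rightarrow> real"
  assumes "t \<in> {0..s}"
  shows "integral\<^sup>L (lebesgue_on {0..t}) k = (\<integral>u. indicator {..t} u * k u \<partial>lebesgue_on {0..s})"
proof -
  have "lebesgue_on {0..t} = restrict_space (lebesgue_on {0..s}) {..t}"
    using assms by (simp add: restrict_restrict_space Int_commute)
  also have "integral\<^sup>L \<dots> k = (\<integral>u. indicator {..t} u *\<^sub>R k u \<partial>lebesgue_on {0..s})"
    by (rule integral_restrict_space) (auto simp: sets_restrict_space_iff)
  finally show ?thesis by simp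
qed

lemma AE_lebesgue_on_mem: "AE t in lebesgue_on S. t \<in> S"
  by (rule AE_I2) simp

lemma AE_lebesgue_on_neq: "AE u in lebesgue_on {a..b}. u \<noteq> (t::real)"
  using AE_completion[OF AE_lborel_singleton[of t]]
  by (subst AE_restrict_space_iff) (auto elim: eventually_mono)

lemma integrable_product_lebesgue_on:
  fixes f k :: "real \<Rightarrow> real"
  assumes f: "integrable (lebesgue_on {0..s}) f" and k: "integrable (lebesgue_on {0..s}) k"
  shows "integrable (lebesgue_on {0..s} \<Otimes>\<^sub>M lebesgue_on {0..s}) (\<lambda>(t,u). f t * k u)"
proof -
  let ?M = "lebesgue_on {0..s}"
  interpret finite_measure ?M by (rule finite_measure_lebesgue_on) simp
  interpret pair_sigma_finite ?M ?M ..
  have [measurable]: "f \<in> borel_measurable ?M" "k \<in> borel_measurable ?M"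
    using f k by auto
  show ?thesis
  proof (rule Fubini_integrable)
    show "(\<lambda>(t,u). f t * k u) \<in> borel_measurable (?M \<Otimes>\<^sub>M ?M)" by measurable
    show "integrable ?M (\<lambda>t. \<integral>u. norm (case (t, u) of (t, u) \<Rightarrow> f t * k u) \<partial>?M)"
      using f by (simp add: abs_mult)
    show "AE t in ?M. integrable ?M (\<lambda>u. case (t, u) of (t, u) \<Rightarrow> f t * k u)"
      using k by simp
  qed
qed

text \<open>By Fubini, the two
  terms are the integrals of \<open>f(t) k(u)\<close> over the triangles \<open>u < t\<close> and \<open>t \<le> u\<close> of \<open>[0,s]\<^sup>2\<close>.\<close>
lemma indefinite_integral_by_parts:
  fixes f k :: "real \<Rightarrow> real"
  assumes f: "integrable (lebesgue_on {0..s}) f" and k: "integrable (lebesgue_on {0..s}) k"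
  shows "integral\<^sup>L (lebesgue_on {0..s}) (\<lambda>t. f t * integral\<^sup>L (lebesgue_on {0..t}) k)
       + integral\<^sup>L (lebesgue_on {0..s}) (\<lambda>t. k t * integral\<^sup>L (lebesgue_on {0..t}) f)
       = integral\<^sup>L (lebesgue_on {0..s}) f * integral\<^sup>L (lebesgue_on {0..s}) k"
proof -
  let ?M = "lebesgue_on {0..s}"
  interpret finite_measure ?M by (rule finite_measure_lebesgue_on) simp
  interpret pair_sigma_finite ?M ?M ..
  have [measurable]: "f \<in> borel_measurable ?M" "k \<in> borel_measurable ?M"
    using f k by auto
  have P: "integrable (?M \<Otimes>\<^sub>M ?M) (\<lambda>(t,u). f t * k u)"
    by (rule integrable_product_lebesgue_on[OF f k])
  define F where "F t u = indicator {..<t} u * (f t * k u)" for t u :: real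
  define G where "G t u = indicator {t..} u * (f t * k u)" for t u :: real
  have iF: "integrable (?M \<Otimes>\<^sub>M ?M) (case_prod F)"
    unfolding F_def by (rule Bochner_Integration.integrable_bound[OF P]) (auto simp: indicator_def)
  have iG: "integrable (?M \<Otimes>\<^sub>M ?M) (case_prod G)"
    unfolding G_def by (rule Bochner_Integration.integrable_bound[OF P]) (auto simp: indicator_def)
  have "integral\<^sup>L ?M (\<lambda>t. f t * integral\<^sup>L (lebesgue_on {0..t}) k) = (\<integral>t. \<integral>u. F t u \<partial>?M \<partial>?M)"
  proof (rule Bochner_Integration.integral_cong[OF refl])
    fix t assume t: "t \<in> space ?M"
    have "AE u in ?M. indicator {..t} u * k u = indicator {..<t} u * k u"
      using AE_lebesgue_on_neq[where a=0 and b=s and t=t]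
      by eventually_elim (auto simp: indicator_def)
    then have "integral\<^sup>L (lebesgue_on {0..t}) k = (\<integral>u. indicator {..<t} u * k u \<partial>?M)"
      using integral_Icc_as_indicator[of t s k] t by (simp add: integral_cong_AE)
    then show "f t * integral\<^sup>L (lebesgue_on {0..t}) k = (\<integral>u. F t u \<partial>?M)"
      by (simp add: F_def mult.left_commute)
  qed
  moreover have "integral\<^sup>L ?M (\<lambda>u. k u * integral\<^sup>L (lebesgue_on {0..u}) f) = (\<integral>u. \<integral>t. G t u \<partial>?M \<partial>?M)"
  proof (rule Bochner_Integration.integral_cong[OF refl])
    fix u assume "u \<in> space ?M"
    then show "k u * integral\<^sup>L (lebesgue_on {0..u}) f = (\<integral>t. G t u \<partial>?M)"
      using integral_Icc_as_indicator[of u s f]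
      by (simp add: G_def indicator_def mult.commute mult.left_commute flip: integral_mult_right_zero)
  qed
  moreover have "(\<integral>t. \<integral>u. F t u \<partial>?M \<partial>?M) + (\<integral>u. \<integral>t. G t u \<partial>?M \<partial>?M)
      = integral\<^sup>L (?M \<Otimes>\<^sub>M ?M) (\<lambda>(t,u). f t * k u)"
  proof -
    have "\<And>t u. F t u + G t u = f t * k u" by (simp add: F_def G_def indicator_def)
    then show ?thesis
      unfolding integral_fst[OF iF] integral_snd[OF iG] Bochner_Integration.integral_add[OF iF iG, symmetric]
      by (simp add: split_beta')
  qed
  moreover have "integral\<^sup>L (?M \<Otimes>\<^sub>M ?M) (\<lambda>(t,u). f t * k u) = integral\<^sup>L ?M f * integral\<^sup>L ?M k"
    using integral_fst[OF P] by simp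
  ultimately show ?thesis by simp
qed

lemma integral_Icc_derivative:
  fixes P P' :: "real \<Rightarrow> real"
  assumes d: "\<forall>x\<in>{0..b}. (P has_real_derivative P' x) (at x within {0..b})"
    and c: "continuous_on {0..b} P'" and t: "t \<in> {0..b}"
  shows "integral\<^sup>L (lebesgue_on {0..t}) P' = P t - P 0"
proof -
  have "continuous_on {0..t} P'" using t by (intro continuous_on_subset[OF c]) auto
  then have "(P' has_integral (integral\<^sup>L (lebesgue_on {0..t}) P')) {0..t}"
    by (intro has_integral_integral_lebesgue_on continuous_imp_integrable_real) auto
  moreover have "(P' has_integral (P t - P 0)) {0..t}"
  proof (rule fundamental_theorem_of_calculus)
    show "(P has_vector_derivative P' x) (at x within {0..t})" if "x \<in> {0..t}" for x
      using d that t
      by (auto simp: has_real_derivative_iff_has_vector_derivative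
          intro: has_vector_derivative_within_subset[of _ _ _ "{0..b}"])
  qed (use t in auto)
  ultimately show ?thesis by (rule has_integral_unique)
qed

lemma integrable_mult_continuous:
  fixes f c :: "real \<Rightarrow> real"
  assumes f: "integrable (lebesgue_on {0..s}) f" and c: "continuous_on {0..s} c"
  shows "integrable (lebesgue_on {0..s}) (\<lambda>t. f t * c t)"
proof -
  obtain B where B: "B \<ge> 0" "\<And>t. t \<in> {0..s} \<Longrightarrow> norm (c t) \<le> B"
    using continuous_on_compact_bound[OF compact_Icc c] by blast
  show ?thesis
  proof (rule Bochner_Integration.integrable_bound)
    show "integrable (lebesgue_on {0..s}) (\<lambda>t. B * norm (f t))" using f by simp
    show "(\<lambda>t. f t * c t) \<in> borel_measurable (lebesgue_on {0..s})"
      using borel_measurable_integrable[OF f] continuous_on_Icc_measurable[OF c]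
      by measurable
    show "AE t in lebesgue_on {0..s}. norm (f t * c t) \<le> norm (B * norm (f t))"
      using B by (intro AE_I2) (auto simp: abs_mult mult.commute intro!: mult_right_mono)
  qed
qed

text \<open>It follows from integration by parts applied to \<open>P'\<close> and \<open>k\<close>.\<close>
lemma integral_product_rule:
  fixes P P' k :: "real \<Rightarrow> real"
  assumes d: "\<forall>x\<in>{0..b}. (P has_real_derivative P' x) (at x within {0..b})"
    and c: "continuous_on {0..b} P'"
    and k: "integrable (lebesgue_on {0..s}) k" and s: "s \<le> b" and t: "t \<in> {0..s}"
  shows "integrable (lebesgue_on {0..t}) (\<lambda>u. P' u * integral\<^sup>L (lebesgue_on {0..u}) k + P u * k u)"
    and "integral\<^sup>L (lebesgue_on {0..t}) (\<lambda>u. P' u * integral\<^sup>L (lebesgue_on {0..u}) k + P u * k u)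
       = P t * integral\<^sup>L (lebesgue_on {0..t}) k"
proof -
  let ?M = "lebesgue_on {0..t}"
  define K where "K u = integral\<^sup>L (lebesgue_on {0..u}) k" for u
  have kt: "integrable ?M k" using t by (intro integrable_subinterval[OF k]) auto
  have "continuous_on {0..b} P"
    using d by (intro continuous_on_vector_derivative)
      (auto simp: has_real_derivative_iff_has_vector_derivative)
  then have cP: "continuous_on {0..t} P" using s t by (elim continuous_on_subset) auto
  have cP': "continuous_on {0..t} P'" using s t by (intro continuous_on_subset[OF c]) auto
  have iP'K: "integrable ?M (\<lambda>u. P' u * K u)"
    unfolding K_def by (intro continuous_imp_integrable_real continuous_intros cP'
        indefinite_integral_continuous_real kt)
  have iPk: "integrable ?M (\<lambda>u. P u * k u)"
    using integrable_mult_continuous[OF kt cP] by (simp add: mult.commute)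
  show "integrable ?M (\<lambda>u. P' u * integral\<^sup>L (lebesgue_on {0..u}) k + P u * k u)"
    using iP'K iPk unfolding K_def by simp
  have FTC: "integral\<^sup>L (lebesgue_on {0..u}) P' = P u - P 0" if "u \<in> {0..t}" for u
    using that s t by (intro integral_Icc_derivative[OF d c]) auto
  have "integral\<^sup>L ?M (\<lambda>u. k u * integral\<^sup>L (lebesgue_on {0..u}) P')
      = integral\<^sup>L ?M (\<lambda>u. k u * (P u - P 0))"
    using FTC by (intro Bochner_Integration.integral_cong) auto
  then have "integral\<^sup>L ?M (\<lambda>u. P' u * K u) + integral\<^sup>L ?M (\<lambda>u. k u * (P u - P 0))
      = (P t - P 0) * K t"
    using indefinite_integral_by_parts[OF continuous_imp_integrable_real[OF cP'] kt] FTC t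
    unfolding K_def by simp
  moreover have "integral\<^sup>L ?M (\<lambda>u. k u * (P u - P 0)) = integral\<^sup>L ?M (\<lambda>u. P u * k u) - P 0 * K t"
    using iPk kt unfolding K_def by (simp add: algebra_simps)
  ultimately show "integral\<^sup>L ?M (\<lambda>u. P' u * integral\<^sup>L (lebesgue_on {0..u}) k + P u * k u)
      = P t * integral\<^sup>L (lebesgue_on {0..t}) k"
    using iP'K iPk unfolding K_def by (simp add: algebra_simps)
qed

lemma integral_product_of_primitives:
  fixes f k :: "real \<Rightarrow> real"
  assumes f: "integrable (lebesgue_on {0..s}) f" and k: "integrable (lebesgue_on {0..s}) k"
  shows "integral\<^sup>L (lebesgue_on {0..s})
           (\<lambda>t. f t * integral\<^sup>L (lebesgue_on {0..t}) k + (a + integral\<^sup>L (lebesgue_on {0..t}) f) * k t)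
       = (a + integral\<^sup>L (lebesgue_on {0..s}) f) * integral\<^sup>L (lebesgue_on {0..s}) k"
proof -
  let ?M = "lebesgue_on {0..s}"
  define F where "F t = integral\<^sup>L (lebesgue_on {0..t}) f" for t
  define K where "K t = integral\<^sup>L (lebesgue_on {0..t}) k" for t
  have ifK: "integrable ?M (\<lambda>t. f t * K t)" and ikF: "integrable ?M (\<lambda>t. k t * F t)"
    unfolding F_def K_def using f k
    by (auto intro!: integrable_mult_continuous indefinite_integral_continuous_real)
  have "integral\<^sup>L ?M (\<lambda>t. f t * K t + (a + F t) * k t)
      = integral\<^sup>L ?M (\<lambda>t. f t * K t) + integral\<^sup>L ?M (\<lambda>t. k t * F t) + a * integral\<^sup>L ?M k"
    using ifK ikF k by (simp add: algebra_simps)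
  also have "\<dots> = (a + F s) * K s"
    using indefinite_integral_by_parts[OF f k] unfolding F_def K_def by (simp add: algebra_simps)
  finally show ?thesis unfolding F_def K_def .
qed

section \<open>Square integrable functions on \<open>[0,s]\<close>\<close>

lemma L2_measurable: "L2 s V \<Longrightarrow> V \<in> borel_measurable (lebesgue_on {0..s})"
  unfolding L2_def by simp

lemma L2_integrable:
  fixes a :: "real \<Rightarrow> real"
  assumes "L2 s a"
  shows "integrable (lebesgue_on {0..s}) a"
proof -
  interpret finite_measure "lebesgue_on {0..s}" by (rule finite_measure_lebesgue_on) simp
  show ?thesis
    using assms unfolding L2_def by (auto intro: square_integrable_imp_integrable)
qed

lemma L2_cong:
  assumes "\<And>t. t \<in> {0..s} \<Longrightarrow> f t = f' t" and "L2 s f"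
  shows "L2 s f'"
proof -
  have "f' \<in> borel_measurable (lebesgue_on {0..s})"
    using assms measurable_lebesgue_cong[of "{0..s}" f f'] unfolding L2_def by simp
  moreover have "integrable (lebesgue_on {0..s}) (\<lambda>t. (norm (f' t))\<^sup>2)"
    using assms(2) unfolding L2_def
    by (subst Bochner_Integration.integrable_cong[OF refl, where g="\<lambda>t. (norm (f t))\<^sup>2"])
      (auto simp: assms(1))
  ultimately show ?thesis unfolding L2_def by simp
qed

lemma L2_continuous:
  fixes f :: "real \<Rightarrow> 'a::euclidean_space"
  assumes "continuous_on {0..s} f"
  shows "L2 s f"
  unfolding L2_def
proof
  show "f \<in> borel_measurable (lebesgue_on {0..s})"
    using assms by (rule continuous_on_Icc_measurable)
  have "continuous_on {0..s} (\<lambda>t. (norm (f t))\<^sup>2)" using assms by (intro continuous_intros)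
  then show "integrable (lebesgue_on {0..s}) (\<lambda>t. (norm (f t))\<^sup>2)"
    by (rule continuous_imp_integrable_real)
qed

lemma norm_add_square_le:
  fixes a b :: "'a::real_normed_vector"
  shows "(norm (a + b))\<^sup>2 \<le> 2 * (norm a)\<^sup>2 + 2 * (norm b)\<^sup>2"
proof -
  have "(norm (a + b))\<^sup>2 \<le> (norm a + norm b)\<^sup>2" by (intro power_mono norm_triangle_ineq) auto
  also have "\<dots> \<le> 2 * (norm a)\<^sup>2 + 2 * (norm b)\<^sup>2"
    using sum_squares_ge_zero[of "norm a - norm b" 0] by (simp add: power2_eq_square algebra_simps)
  finally show ?thesis .
qed

lemma L2_add:
  fixes V W :: "real \<Rightarrow> 'a::euclidean_space"
  assumes V: "L2 s V" and W: "L2 s W"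
  shows "L2 s (\<lambda>t. V t + W t)"
proof -
  have "integrable (lebesgue_on {0..s}) (\<lambda>t. (norm (V t + W t))\<^sup>2)"
  proof (rule Bochner_Integration.integrable_bound)
    show "integrable (lebesgue_on {0..s}) (\<lambda>t. 2 * (norm (V t))\<^sup>2 + 2 * (norm (W t))\<^sup>2)"
      using V W unfolding L2_def by simp
    show "(\<lambda>t. (norm (V t + W t))\<^sup>2) \<in> borel_measurable (lebesgue_on {0..s})"
      using L2_measurable[OF V] L2_measurable[OF W] by measurable
    show "AE t in lebesgue_on {0..s}.
        norm ((norm (V t + W t))\<^sup>2) \<le> norm (2 * (norm (V t))\<^sup>2 + 2 * (norm (W t))\<^sup>2)"
      by (intro AE_I2) (simp add: norm_add_square_le)
  qed
  moreover have "(\<lambda>t. V t + W t) \<in> borel_measurable (lebesgue_on {0..s})"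
    using L2_measurable[OF V] L2_measurable[OF W] by measurable
  ultimately show ?thesis unfolding L2_def by (intro conjI)
qed

lemma L2_diff:
  fixes V W :: "real \<Rightarrow> 'a::euclidean_space"
  assumes "L2 s V" and "L2 s W"
  shows "L2 s (\<lambda>t. V t - W t)"
proof -
  have "L2 s (\<lambda>t. - W t)"
    using assms(2) unfolding L2_def by (simp add: borel_measurable_uminus)
  from L2_add[OF assms(1) this] show ?thesis by simp
qed

lemma L2_dominated:
  fixes V :: "real \<Rightarrow> 'a::euclidean_space" and f :: "real \<Rightarrow> 'b::euclidean_space"
  assumes V: "L2 s V" and f: "f \<in> borel_measurable (lebesgue_on {0..s})"
    and k: "continuous_on {0..s} k" and bound: "\<And>t. t \<in> {0..s} \<Longrightarrow> norm (f t) \<le> k t * norm (V t)"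
  shows "L2 s f"
proof -
  obtain B where B: "\<And>t. t \<in> {0..s} \<Longrightarrow> norm (k t) \<le> B"
    using continuous_on_compact_bound[OF compact_Icc k] by blast
  have iV: "integrable (lebesgue_on {0..s}) (\<lambda>t. B^2 * (norm (V t))\<^sup>2)"
    using V unfolding L2_def by simp
  have "integrable (lebesgue_on {0..s}) (\<lambda>t. (norm (f t))\<^sup>2)"
  proof (rule Bochner_Integration.integrable_bound[OF iV])
    show "(\<lambda>t. (norm (f t))\<^sup>2) \<in> borel_measurable (lebesgue_on {0..s})"
      using measurable_compose[OF f borel_measurable_norm] by (rule borel_measurable_power)
    show "AE t in lebesgue_on {0..s}. norm ((norm (f t))\<^sup>2) \<le> norm (B^2 * (norm (V t))\<^sup>2)"
    proof (rule AE_I2)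
      fix t assume "t \<in> space (lebesgue_on {0..s})"
      then have t: "t \<in> {0..s}" by simp
      have "k t * norm (V t) \<le> B * norm (V t)"
        using B[OF t] by (intro mult_right_mono) auto
      then have "norm (f t) \<le> B * norm (V t)"
        using bound[OF t] by linarith
      then have "(norm (f t))\<^sup>2 \<le> (B * norm (V t))\<^sup>2" by (intro power_mono) auto
      then show "norm ((norm (f t))\<^sup>2) \<le> norm (B^2 * (norm (V t))\<^sup>2)"
        by (simp add: power_mult_distrib)
    qed
  qed
  with f show ?thesis unfolding L2_def by (intro conjI)
qed

lemma L2_scaleR_continuous:
  fixes V :: "real \<Rightarrow> 'a::euclidean_space" and m :: "real \<Rightarrow> real"
  assumes V: "L2 s V" and m: "continuous_on {0..s} m"
  shows "L2 s (\<lambda>t. m t *\<^sub>R V t)"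
proof (rule L2_dominated[OF V])
  show "(\<lambda>t. m t *\<^sub>R V t) \<in> borel_measurable (lebesgue_on {0..s})"
    using continuous_on_Icc_measurable[OF m] L2_measurable[OF V]
    by (intro borel_measurable_scaleR) auto
  show "continuous_on {0..s} (\<lambda>t. norm (m t))" using m by (intro continuous_intros)
qed simp

lemma L2_scaleR_continuous_vector:
  fixes a :: "real \<Rightarrow> real" and c :: "real \<Rightarrow> 'a::euclidean_space"
  assumes a: "L2 s a" and c: "continuous_on {0..s} c"
  shows "L2 s (\<lambda>t. a t *\<^sub>R c t)"
proof (rule L2_dominated[OF a])
  show "(\<lambda>t. a t *\<^sub>R c t) \<in> borel_measurable (lebesgue_on {0..s})"
    using continuous_on_Icc_measurable[OF c] L2_measurable[OF a]
    by (intro borel_measurable_scaleR) auto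
  show "continuous_on {0..s} (\<lambda>t. norm (c t))" using c by (intro continuous_intros)
qed (simp add: mult.commute)

lemma H1_continuous:
  assumes "H1 s h h'"
  shows "continuous_on {0..s} h"
proof -
  have "integrable (lebesgue_on {0..s}) h'"
    using assms unfolding H1_def by (blast intro: L2_integrable)
  then have "continuous_on {0..s} (\<lambda>t. h 0 + integral\<^sup>L (lebesgue_on {0..t}) h')"
    by (intro continuous_on_add continuous_on_const indefinite_integral_continuous_real)
  then show ?thesis
    by (rule continuous_on_eq) (use assms in \<open>unfold H1_def, metis\<close>)
qed

section \<open>Symmetric bilinear forms of index one\<close>

lemma bilinear_expand:
  fixes g :: "'a::euclidean_space \<Rightarrow> 'a \<Rightarrow> real"
  assumes bil: "bilinear g"
  shows "g (a *\<^sub>R x + b *\<^sub>R y) (c *\<^sub>R u + d *\<^sub>R v) = a*c * g x u + a*d * g x v + b*c * g y u + b*d * g y v"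
  by (simp add: bilinear_ladd[OF bil] bilinear_radd[OF bil] bilinear_lmul[OF bil]
      bilinear_rmul[OF bil] algebra_simps)

lemma form_index_ge:
  fixes g :: "'a::euclidean_space \<Rightarrow> 'a \<Rightarrow> real"
  assumes "subspace W" and "\<forall>x\<in>W. x \<noteq> 0 \<longrightarrow> g x x < 0"
  shows "dim W \<le> form_index g"
  unfolding form_index_def
proof (rule Greatest_le_nat)
  show "\<exists>W'. subspace W' \<and> dim W' = dim W \<and> (\<forall>x\<in>W'. x \<noteq> 0 \<longrightarrow> g x x < 0)"
    using assms by blast
  show "k \<le> DIM('a)" if "\<exists>W. subspace W \<and> dim W = k \<and> (\<forall>x\<in>W. x \<noteq> 0 \<longrightarrow> g x x < 0)" for k
    using that dim_subset_UNIV by blast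
qed

text \<open>For a form of index one, two mutually orthogonal vectors cannot both be timelike:
  they would span a negative definite plane.\<close>
lemma index_one_no_orthogonal_timelike:
  fixes g :: "'a::euclidean_space \<Rightarrow> 'a \<Rightarrow> real"
  assumes bil: "bilinear g" and sym: "\<forall>x y. g x y = g y x" and idx: "form_index g = 1"
    and y: "g y y < 0" and x: "g x y = 0" "g x x < 0"
  shows False
proof -
  have g0: "g 0 z = 0" for z using bilinear_lzero[OF bil] by simp
  have "y \<noteq> 0" "x \<noteq> y" using x y g0 by auto
  have "x \<notin> span {y}"
  proof
    assume "x \<in> span {y}"
    then obtain k where k: "x = k *\<^sub>R y" by (auto simp: span_singleton)
    then have "k = 0" using x(1) y bilinear_lmul[OF bil] by simp
    then show False using k x(2) g0 by simp
  qed
  then have "independent {x, y}"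
    using \<open>y \<noteq> 0\<close> by (intro independent_insertI) (auto simp: independent_empty intro: independent_insertI)
  then have dim2: "dim (span {x, y}) = 2"
    using dim_span_eq_card_independent \<open>x \<noteq> y\<close> by fastforce
  have "g z z < 0" if z: "z \<in> span {x, y}" "z \<noteq> 0" for z
  proof -
    obtain a b where ab: "z = a *\<^sub>R x + b *\<^sub>R y"
      using z(1) by (auto simp: span_breakdown_eq span_singleton) (metis add.commute diff_add_cancel)
    have "g z z = (a * a) * g x x + (b * b) * g y y"
      using ab bilinear_expand[OF bil, of a x b y a x b y] x(1) sym by auto
    moreover have "(a * a) * g x x \<le> 0" "(b * b) * g y y \<le> 0"
      using x(2) y by (auto intro: mult_nonneg_nonpos)
    moreover have "(a * a) * g x x < 0 \<or> (b * b) * g y y < 0"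
      using ab z(2) x(2) y by (auto intro!: mult_pos_neg simp: zero_less_mult_iff)
    ultimately show ?thesis by linarith
  qed
  then have "dim (span {x, y}) \<le> form_index g"
    by (intro form_index_ge) auto
  then show False using dim2 idx by simp
qed

text \<open>A null
  such vector \<open>x\<close> is excluded by nondegeneracy: perturbing it inside \<open>y\<^sup>\<perp>\<close> towards a vector
  \<open>w'\<close> with \<open>g x w' \<noteq> 0\<close> produces a timelike vector orthogonal to \<open>y\<close>.\<close>
lemma orthogonal_to_timelike_spacelike:
  fixes g :: "'a::euclidean_space \<Rightarrow> 'a \<Rightarrow> real"
  assumes g: "nondeg_sym_bilinear g" and idx: "form_index g = 1"
    and y: "g y y < 0" and x: "g x y = 0" "x \<noteq> 0"
  shows "0 < g x x"
proof (rule ccontr)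
  have bil: "bilinear g" and sym: "\<forall>x y. g x y = g y x"
    and nd: "\<forall>x. (\<forall>y. g x y = 0) \<longrightarrow> x = 0"
    using g unfolding nondeg_sym_bilinear_def by auto
  note no_timelike = index_one_no_orthogonal_timelike[OF bil sym idx y]
  assume "\<not> 0 < g x x"
  then have gxx: "g x x = 0" using no_timelike[OF x(1)] by fastforce
  obtain w where w: "g x w \<noteq> 0" using nd x(2) by blast
  define w' where "w' = w - (g w y / g y y) *\<^sub>R y"
  have w'y: "g w' y = 0"
    using y unfolding w'_def by (simp add: bilinear_lsub[OF bil] bilinear_lmul[OF bil])
  have xw': "g x w' = g x w"
    using x(1) unfolding w'_def by (simp add: bilinear_rsub[OF bil] bilinear_rmul[OF bil])
  define m where "m = \<bar>g w' w'\<bar> + 1"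
  define c where "c = g x w / m"
  have m: "m > 0" "g w' w' - 2 * m < 0" unfolding m_def by auto
  have "c \<noteq> 0" using w m(1) unfolding c_def by simp
  define x' where "x' = 1 *\<^sub>R x + (- c) *\<^sub>R w'"
  have x'y: "g x' y = 0"
    unfolding x'_def using x(1) w'y by (simp add: bilinear_lsub[OF bil] bilinear_lmul[OF bil])
  have "g x' x' = (c * c) * (g w' w' - 2 * m)"
    unfolding x'_def bilinear_expand[OF bil] using gxx xw' sym m(1)
    by (simp add: c_def field_simps)
  also have "\<dots> < 0"
    using \<open>c \<noteq> 0\<close> m(2) by (intro mult_pos_neg) (auto simp: zero_less_mult_iff)
  finally show False using no_timelike[OF x'y] by simp
qed

section \<open>The setting: a timelike curve in a space with a form of index one\<close>

locale timelike_curve =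
  fixes g :: "'a::euclidean_space \<Rightarrow> 'a \<Rightarrow> real"
    and Y Y' :: "real \<Rightarrow> 'a"
    and A :: "real \<Rightarrow> 'a \<Rightarrow> 'a"
    and \<sigma> :: real
  assumes g: "nondeg_sym_bilinear g" and idx: "form_index g = 1"
    and dY: "\<forall>t\<in>{0..1}. (Y has_vector_derivative Y' t) (at t within {0..1})"
    and cY': "continuous_on {0..1} Y'"
    and timelike: "\<forall>t\<in>{0..1}. g (Y t) (Y t) < 0"
    and A: "\<forall>t\<in>{0..1}. \<forall>V W. g V W = gr g Y t (A t V) W"
    and \<sigma>: "\<sigma> \<in> {0<..1}"
begin

lemma bil: "bilinear g" and sym: "g x y = g y x"
  using g unfolding nondeg_sym_bilinear_def by auto

lemma g_simps:
  "g (x + y) z = g x z + g y z" "g z (x + y) = g z x + g z y"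
  "g (x - y) z = g x z - g y z" "g z (x - y) = g z x - g z y"
  "g (c *\<^sub>R x) z = c * g x z" "g z (c *\<^sub>R x) = c * g z x"
  "g 0 z = 0" "g z 0 = 0"
  using bilinear_ladd[OF bil] bilinear_radd[OF bil] bilinear_lsub[OF bil] bilinear_rsub[OF bil]
    bilinear_lmul[OF bil] bilinear_rmul[OF bil] bilinear_lzero[OF bil] bilinear_rzero[OF bil]
  by auto

lemma bounded_bilinear_g: "bounded_bilinear g"
  using bil bilinear_conv_bounded_bilinear by blast

lemma g_measurable[measurable]:
  assumes [measurable]: "F \<in> borel_measurable M" "G \<in> borel_measurable M"
  shows "(\<lambda>t. g (F t) (G t)) \<in> borel_measurable M"
proof -
  have "continuous_on UNIV (\<lambda>x. g (fst x) (snd x))"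
    by (rule bounded_bilinear.continuous_on[OF bounded_bilinear_g]) (auto intro: continuous_intros)
  then show ?thesis using borel_measurable_continuous_Pair[OF assms] by blast
qed

lemma g_continuous_on:
  assumes "continuous_on S F" "continuous_on S G"
  shows "continuous_on S (\<lambda>t. g (F t) (G t))"
  by (rule bounded_bilinear.continuous_on[OF bounded_bilinear_g assms])

lemma \<sigma>_bounds: "0 < \<sigma>" "\<sigma> \<le> 1" using \<sigma> by auto

lemma in_unit_interval: "t \<in> {0..\<sigma>} \<Longrightarrow> t \<in> {0..1}" using \<sigma>_bounds by auto

lemma continuous_on_restrict_\<sigma>: "continuous_on {0..1} f \<Longrightarrow> continuous_on {0..\<sigma>} f"
  using \<sigma>_bounds by (elim continuous_on_subset) auto

lemma measurable_restrict_\<sigma>: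
  "continuous_on {0..1} f \<Longrightarrow> f \<in> borel_measurable (lebesgue_on {0..\<sigma>})"
  by (rule continuous_on_Icc_measurable[OF continuous_on_restrict_\<sigma>])

lemma cY: "continuous_on {0..1} Y"
  using dY by (intro continuous_on_vector_derivative) auto

lemma L2_g:
  assumes V: "L2 \<sigma> V" and c: "continuous_on {0..1} c"
  shows "L2 \<sigma> (\<lambda>t. g (V t) (c t))"
proof -
  obtain C where C: "\<And>x y. norm (g x y) \<le> norm x * norm y * C"
    using bounded_bilinear.bounded[OF bounded_bilinear_g] by blast
  show ?thesis
  proof (rule L2_dominated[OF V])
    show "(\<lambda>t. g (V t) (c t)) \<in> borel_measurable (lebesgue_on {0..\<sigma>})"
      using L2_measurable[OF V] measurable_restrict_\<sigma>[OF c] by measurable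
    show "continuous_on {0..\<sigma>} (\<lambda>t. C * norm (c t))"
      by (intro continuous_intros continuous_on_restrict_\<sigma> c)
    show "norm (g (V t) (c t)) \<le> C * norm (c t) * norm (V t)" for t
      using C[of "V t" "c t"] by (simp add: algebra_simps)
  qed
qed

definition N :: "real \<Rightarrow> real" where "N t = g (Y t) (Y t)"

lemma N_neg: "t \<in> {0..1} \<Longrightarrow> N t < 0" and N_nonzero: "t \<in> {0..1} \<Longrightarrow> N t \<noteq> 0"
  using timelike unfolding N_def by force+

lemma N_continuous: "continuous_on {0..1} N"
  unfolding N_def by (intro g_continuous_on cY)

lemma N_derivative: "\<forall>t\<in>{0..1}. (N has_real_derivative 2 * g (Y' t) (Y t)) (at t within {0..1})"
proof
  fix t :: real assume t: "t \<in> {0..1}"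
  have "((\<lambda>t. g (Y t) (Y t)) has_vector_derivative g (Y t) (Y' t) + g (Y' t) (Y t)) (at t within {0..1})"
    using bounded_bilinear.has_vector_derivative[OF bounded_bilinear_g] dY t by auto
  then show "(N has_real_derivative 2 * g (Y' t) (Y t)) (at t within {0..1})"
    unfolding N_def has_real_derivative_iff_has_vector_derivative by (simp add: sym[of "Y t"])
qed

lemma N_derivative_continuous: "continuous_on {0..1} (\<lambda>t. 2 * g (Y' t) (Y t))"
  by (intro continuous_intros g_continuous_on cY cY')

lemma orthogonal_Y_spacelike: "t \<in> {0..1} \<Longrightarrow> g x (Y t) = 0 \<Longrightarrow> x \<noteq> 0 \<Longrightarrow> 0 < g x x"
  using orthogonal_to_timelike_spacelike[OF g idx, of "Y t" x] timelike by auto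

lemma orthogonal_Y_nonneg: "t \<in> {0..1} \<Longrightarrow> g x (Y t) = 0 \<Longrightarrow> 0 \<le> g x x"
  using orthogonal_Y_spacelike[of t x] g_simps by (cases "x = 0") auto

text \<open>The g-reflection \<open>R\<^sub>t\<close> in the hyperplane \<open>Y(t)\<^sup>\<perp>\<close>; the inner products \<open>g\<^sup>(\<^sup>r\<^sup>)\<^sub>t\<close> are \<open>g(R\<^sub>t \<cdot>, \<cdot>)\<close>.\<close>
definition R :: "real \<Rightarrow> 'a \<Rightarrow> 'a" where "R t x = x - (2 * g x (Y t) / N t) *\<^sub>R Y t"

lemma gr_eq_R: "gr g Y t v w = g (R t v) w"
  unfolding gr_def R_def N_def by (simp add: g_simps sym[of w])

lemma R_linear: "R t (a *\<^sub>R u + b *\<^sub>R v) = a *\<^sub>R R t u + b *\<^sub>R R t v"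
  unfolding R_def by (simp add: g_simps add_divide_distrib scaleR_add_left algebra_simps)

lemma R_involution: "t \<in> {0..1} \<Longrightarrow> R t (R t x) = x"
  unfolding R_def using N_nonzero[of t] by (simp add: g_simps N_def[symmetric] field_simps)

lemma gr_A_combination:
  assumes t: "t \<in> {0..1}"
  shows "gr g Y t (a *\<^sub>R A t (Y t) + b *\<^sub>R A t (Y' t)) w = a * g (Y t) w + b * g (Y' t) w"
proof -
  have "gr g Y t (A t x) w = g x w" for x using A t by simp
  then show ?thesis by (simp add: gr_eq_R R_linear g_simps)
qed

text \<open>\<open>g\<^sup>(\<^sup>r\<^sup>)\<^sub>t\<close> is positive definite: writing \<open>d = e + a Y\<close> with \<open>e \<perp> Y\<close> gives
  \<open>g\<^sup>(\<^sup>r\<^sup>)\<^sub>t(d,d) = g(e,e) - a\<^sup>2 N \<ge> 0\<close>, with equality only for \<open>d = 0\<close>.\<close>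
lemma gr_positive:
  assumes t: "t \<in> {0..1}" and d: "d \<noteq> 0"
  shows "0 < gr g Y t d d"
proof -
  define a where "a = g d (Y t) / N t"
  define e where "e = d - a *\<^sub>R Y t"
  have Nt: "N t < 0" using N_neg t by simp
  have ey: "g e (Y t) = 0" unfolding e_def a_def using Nt by (simp add: g_simps N_def)
  have "gr g Y t d d = g e e - a * a * N t"
  proof -
    have dd: "d = e + a *\<^sub>R Y t" unfolding e_def by simp
    have "gr g Y t d d = g d d - 2 * g d (Y t) * g d (Y t) / N t" unfolding gr_def N_def by simp
    also have "g d (Y t) = a * N t" unfolding a_def using Nt by simp
    also have "g d d = g e e + a * a * N t"
      by (subst (1 2) dd) (simp add: g_simps ey sym[of "Y t" e] N_def algebra_simps)
    finally show ?thesis using Nt by (simp add: field_simps power2_eq_square)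
  qed
  moreover have "e \<noteq> 0 \<or> a \<noteq> 0" using d unfolding e_def by auto
  moreover have "0 \<le> g e e" and "e \<noteq> 0 \<Longrightarrow> 0 < g e e"
    using orthogonal_Y_nonneg[OF t ey] orthogonal_Y_spacelike[OF t ey] by auto
  moreover have "0 \<le> - (a * a * N t)" and "a \<noteq> 0 \<Longrightarrow> 0 < - (a * a * N t)"
    using Nt by (auto simp: mult_nonneg_nonpos zero_less_mult_iff mult_less_0_iff)
  ultimately show ?thesis by fastforce
qed

text \<open>Hence the operator \<open>A(t)\<close> is the reflection \<open>R\<^sub>t\<close>: both satisfy \<open>g\<^sup>(\<^sup>r\<^sup>)\<^sub>t(\<cdot> x, w) = g(x, w)\<close>.\<close>
lemma A_eq_R:
  assumes t: "t \<in> {0..1}"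
  shows "A t x = R t x"
proof (rule ccontr)
  define d where "d = A t x - R t x"
  assume "A t x \<noteq> R t x"
  then have "0 < gr g Y t d d" unfolding d_def by (intro gr_positive[OF t]) simp
  moreover have "gr g Y t (A t x) d = g x d" using A t by simp
  moreover have "gr g Y t (R t x) d = g x d" unfolding gr_eq_R using R_involution[OF t] by simp
  moreover have "gr g Y t d d = gr g Y t (A t x) d - gr g Y t (R t x) d"
    unfolding d_def gr_eq_R using R_linear[of t 1 "A t x" "-1" "R t x"] by (simp add: g_simps)
  ultimately show False by simp
qed

lemma inverse_N_derivative:
  "\<forall>t\<in>{0..1}. ((\<lambda>t. 1 / N t) has_real_derivative - 2 * g (Y' t) (Y t) / (N t)\<^sup>2) (at t within {0..1})"
proof
  fix t :: real assume t: "t \<in> {0..1}"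
  have "((\<lambda>t. inverse (N t)) has_real_derivative
      - (inverse (N t) * (2 * g (Y' t) (Y t)) * inverse (N t))) (at t within {0..1})"
    by (rule DERIV_inverse') (use N_derivative t N_nonzero in auto)
  then show "((\<lambda>t. 1 / N t) has_real_derivative - 2 * g (Y' t) (Y t) / (N t)\<^sup>2) (at t within {0..1})"
    by (simp add: divide_inverse power2_eq_square mult.commute mult.left_commute)
qed

lemma inverse_N_derivative_continuous:
  "continuous_on {0..1} (\<lambda>t. - 2 * g (Y' t) (Y t) / (N t)\<^sup>2)"
  using N_continuous N_nonzero by (intro continuous_intros g_continuous_on cY cY') auto

end

section \<open>Gradient-type fields are orthogonal to \<open>K\<^sub>0(\<sigma>)\<close>\<close>

context timelike_curve
begin

text \<open>With \<open>\<Phi>\<close> the primitive of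
  \<open>w = g(W,Y')\<close> the integrand is \<open>2(h' \<Phi> + h w)\<close> almost everywhere, whose integral is
  \<open>2 h(\<sigma>) \<Phi>(\<sigma>) = 0\<close>.\<close>
lemma K0_orthogonal_gradient:
  assumes W: "W \<in> K0 g Y Y' \<sigma>" and h: "H1 \<sigma> h h'"
  shows "integral\<^sup>L (lebesgue_on {0..\<sigma>}) (\<lambda>t. h' t * g (W t) (Y t) + 2 * h t * g (W t) (Y' t)) = 0"
proof -
  let ?M = "lebesgue_on {0..\<sigma>}"
  define w where "w s = g (W s) (Y' s)" for s
  define \<Phi> where "\<Phi> t = integral\<^sup>L (lebesgue_on {0..t}) w" for t
  define H where "H t = integral\<^sup>L (lebesgue_on {0..t}) h'" for t
  have WL: "L2 \<sigma> W"
    and W_Y: "AE t in ?M. g (W t) (Y t) = 2 * \<Phi> t"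
    and \<Phi>\<sigma>: "\<Phi> \<sigma> = 0"
    using W unfolding K0_def \<Phi>_def w_def by auto
  have wi: "integrable ?M w" unfolding w_def by (rule L2_integrable[OF L2_g[OF WL cY']])
  have h'i: "integrable ?M h'" using h unfolding H1_def by (blast intro: L2_integrable)
  have h_eq: "h t = h 0 + H t" if "t \<in> {0..\<sigma>}" for t
    using h that unfolding H1_def H_def by blast
  have [measurable]: "h' \<in> borel_measurable ?M" "h \<in> borel_measurable ?M"
    "\<Phi> \<in> borel_measurable ?M" "H \<in> borel_measurable ?M"
    "W \<in> borel_measurable ?M" "Y \<in> borel_measurable ?M" "Y' \<in> borel_measurable ?M"
    unfolding \<Phi>_def H_def
    using h'i WL wi continuous_on_Icc_measurable[OF H1_continuous[OF h]]
      measurable_restrict_\<sigma>[OF cY] measurable_restrict_\<sigma>[OF cY']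
    by (auto dest: L2_measurable intro: continuous_on_Icc_measurable indefinite_integral_continuous_real)
  have "integral\<^sup>L ?M (\<lambda>t. h' t * g (W t) (Y t) + 2 * h t * g (W t) (Y' t))
      = integral\<^sup>L ?M (\<lambda>t. 2 * (h' t * \<Phi> t + (h 0 + H t) * w t))"
  proof (rule integral_cong_AE)
    show "AE t in ?M. h' t * g (W t) (Y t) + 2 * h t * g (W t) (Y' t)
        = 2 * (h' t * \<Phi> t + (h 0 + H t) * w t)"
      using W_Y AE_lebesgue_on_mem[of "{0..\<sigma>}"]
    proof eventually_elim
      case (elim t)
      then have "h t = h 0 + H t" by (intro h_eq)
      with elim show ?case by (simp add: w_def algebra_simps)
    qed
  qed (unfold w_def, measurable)
  also have "\<dots> = 2 * ((h 0 + H \<sigma>) * \<Phi> \<sigma>)"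
    using integral_product_of_primitives[OF h'i wi, of "h 0"] unfolding \<Phi>_def H_def
    by (simp only: integral_mult_right_zero)
  finally show ?thesis using \<Phi>\<sigma> by simp
qed

lemma gradient_field_orthogonal:
  assumes V: "L2 \<sigma> V" and h: "H1 \<sigma> h h'"
    and V_eq: "AE t in lebesgue_on {0..\<sigma>}. V t = h' t *\<^sub>R A t (Y t) + (2 * h t) *\<^sub>R A t (Y' t)"
    and W: "W \<in> K0 g Y Y' \<sigma>"
  shows "Rsig g Y \<sigma> V W = 0"
proof -
  let ?M = "lebesgue_on {0..\<sigma>}"
  have [measurable]: "h' \<in> borel_measurable ?M" "h \<in> borel_measurable ?M"
    "V \<in> borel_measurable ?M" "W \<in> borel_measurable ?M"
    "Y \<in> borel_measurable ?M" "Y' \<in> borel_measurable ?M"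
    using h V W continuous_on_Icc_measurable[OF H1_continuous[OF h]]
      measurable_restrict_\<sigma>[OF cY] measurable_restrict_\<sigma>[OF cY']
    unfolding H1_def K0_def by (auto dest: L2_measurable)
  have "Rsig g Y \<sigma> V W
      = integral\<^sup>L ?M (\<lambda>t. h' t * g (W t) (Y t) + 2 * h t * g (W t) (Y' t))"
    unfolding Rsig_def
  proof (rule integral_cong_AE)
    show "AE t in ?M. gr g Y t (V t) (W t) = h' t * g (W t) (Y t) + 2 * h t * g (W t) (Y' t)"
      using V_eq AE_lebesgue_on_mem[of "{0..\<sigma>}"]
      by eventually_elim (simp add: gr_A_combination[OF in_unit_interval] sym[of "W _"])
  qed (unfold gr_def, measurable)
  then show ?thesis using K0_orthogonal_gradient[OF W h] by simp
qed

end

section \<open>Fields orthogonal to \<open>K\<^sub>0(\<sigma>)\<close> are of gradient type\<close>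

text \<open>Throughout, \<open>V\<close> is \<open>\<R>\<^sub>\<sigma>\<close>-orthogonal to \<open>K\<^sub>0(\<sigma>)\<close> and \<open>U = R V\<close>, so that \<open>\<R>\<^sub>\<sigma>(V,W) = \<integral> g(U,W)\<close>.
  We split \<open>U = \<alpha> Y + Uperp\<close> and \<open>Y' = \<gamma> Y + Z\<close> along \<open>Y\<close> and \<open>Y\<^sup>\<perp>\<close>, and look for
  \<open>U = h' Y + 2 h Y' + D\<close> with \<open>D \<perp> Y\<close>; this forces \<open>h' = \<alpha> - 2 \<gamma> h\<close>, solved by
  \<open>h = (c + K)/N\<close> with \<open>K\<close> the primitive of \<open>g(U,Y)\<close>.  The test field \<open>W = D + 2 \<Psi> Y\<close>, with \<open>\<Psi>\<close>
  the primitive of \<open>g(D,Z)/N\<close>, lies in \<open>K\<^sub>0(\<sigma>)\<close> for the right constant \<open>c\<close>, and pairs with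
  \<open>V\<close> to \<open>\<integral> g(D,D)\<close>; so \<open>D = 0\<close> almost everywhere.\<close>

locale orthogonal_field = timelike_curve +
  fixes V :: "real \<Rightarrow> 'a"
  assumes V_L2: "L2 \<sigma> V" and V_orthogonal: "\<forall>W\<in>K0 g Y Y' \<sigma>. Rsig g Y \<sigma> V W = 0"
begin

definition U :: "real \<Rightarrow> 'a" where "U t = R t (V t)"
definition uY :: "real \<Rightarrow> real" where "uY t = g (U t) (Y t)"
definition \<alpha> :: "real \<Rightarrow> real" where "\<alpha> t = uY t / N t"
definition \<gamma> :: "real \<Rightarrow> real" where "\<gamma> t = g (Y' t) (Y t) / N t"
definition Z :: "real \<Rightarrow> 'a" where "Z t = Y' t - \<gamma> t *\<^sub>R Y t"
definition Uperp :: "real \<Rightarrow> 'a" where "Uperp t = U t - \<alpha> t *\<^sub>R Y t"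

text \<open>The coefficient \<open>h = (c + K)/N\<close>, its derivative \<open>h'\<close>, and the constant \<open>c = c_num/(2 c_den)\<close>
  making \<open>\<Psi>(\<sigma>) = 0\<close>.\<close>
definition K :: "real \<Rightarrow> real" where "K t = integral\<^sup>L (lebesgue_on {0..t}) uY"
definition \<zeta> :: "real \<Rightarrow> real" where "\<zeta> t = g (Z t) (Z t) / (N t)\<^sup>2"
definition c_num :: "real" where "c_num = integral\<^sup>L (lebesgue_on {0..\<sigma>}) (\<lambda>t. g (Uperp t) (Z t) / N t - 2 * K t * \<zeta> t)"
definition c_den :: "real" where "c_den = integral\<^sup>L (lebesgue_on {0..\<sigma>}) \<zeta>"
definition c :: "real" where "c = (if c_den = 0 then 0 else c_num / (2 * c_den))"
definition h :: "real \<Rightarrow> real" where "h t = (c + K t) / N t"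
definition h' :: "real \<Rightarrow> real" where "h' t = \<alpha> t - 2 * \<gamma> t * h t"

definition D :: "real \<Rightarrow> 'a" where "D t = Uperp t - (2 * h t) *\<^sub>R Z t"
definition \<psi> :: "real \<Rightarrow> real" where "\<psi> t = g (D t) (Z t)"
definition \<Psi> :: "real \<Rightarrow> real" where "\<Psi> t = integral\<^sup>L (lebesgue_on {0..t}) (\<lambda>s. \<psi> s / N s)"
definition W :: "real \<Rightarrow> 'a" where "W t = D t + (2 * \<Psi> t) *\<^sub>R Y t"

lemma \<gamma>_continuous: "continuous_on {0..1} \<gamma>"
  unfolding \<gamma>_def using N_continuous N_nonzero by (intro continuous_intros g_continuous_on cY cY') auto

lemma Z_continuous: "continuous_on {0..1} Z"
  unfolding Z_def by (intro continuous_intros \<gamma>_continuous cY cY')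

lemma \<zeta>_continuous: "continuous_on {0..1} \<zeta>"
  unfolding \<zeta>_def using N_continuous N_nonzero by (intro continuous_intros g_continuous_on Z_continuous) auto

lemma inverse_N_continuous_\<sigma>: "continuous_on {0..\<sigma>} (\<lambda>t. 1 / N t)"
  using N_continuous N_nonzero by (intro continuous_on_restrict_\<sigma> continuous_intros) auto

lemma U_L2: "L2 \<sigma> U"
proof -
  have "continuous_on {0..\<sigma>} (\<lambda>t. 2 / N t)"
    using continuous_on_mult_left[OF inverse_N_continuous_\<sigma>, of 2] by simp
  then have "L2 \<sigma> (\<lambda>t. (2 / N t) *\<^sub>R g (V t) (Y t))"
    by (rule L2_scaleR_continuous[OF L2_g[OF V_L2 cY]])
  then have "L2 \<sigma> (\<lambda>t. V t - ((2 / N t) *\<^sub>R g (V t) (Y t)) *\<^sub>R Y t)"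
    by (intro L2_diff[OF V_L2] L2_scaleR_continuous_vector[OF _ continuous_on_restrict_\<sigma>[OF cY]])
  then show ?thesis
    by (rule L2_cong[rotated]) (simp add: U_def R_def)
qed

lemma uY_integrable: "integrable (lebesgue_on {0..\<sigma>}) uY"
  unfolding uY_def by (rule L2_integrable[OF L2_g[OF U_L2 cY]])

lemma \<alpha>_L2: "L2 \<sigma> \<alpha>"
  using L2_scaleR_continuous[OF L2_g[OF U_L2 cY] inverse_N_continuous_\<sigma>]
  by (rule L2_cong[rotated]) (simp add: \<alpha>_def uY_def)

lemma Uperp_L2: "L2 \<sigma> Uperp"
  using L2_diff[OF U_L2 L2_scaleR_continuous_vector[OF \<alpha>_L2 continuous_on_restrict_\<sigma>[OF cY]]]
  by (rule L2_cong[rotated]) (simp add: Uperp_def)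

lemma K_continuous: "continuous_on {0..\<sigma>} K"
  unfolding K_def by (rule indefinite_integral_continuous_real[OF uY_integrable])

lemma h_continuous: "continuous_on {0..\<sigma>} h"
  unfolding h_def using K_continuous continuous_on_restrict_\<sigma>[OF N_continuous] N_nonzero in_unit_interval
  by (intro continuous_intros) auto

lemma h'_L2: "L2 \<sigma> h'"
proof -
  have "continuous_on {0..\<sigma>} (\<lambda>t. 2 * \<gamma> t * h t)"
    by (intro continuous_intros continuous_on_restrict_\<sigma> \<gamma>_continuous h_continuous)
  from L2_diff[OF \<alpha>_L2 L2_continuous[OF this]] show ?thesis by (simp add: h'_def[abs_def])
qed

lemma D_L2: "L2 \<sigma> D"
proof -
  have "continuous_on {0..\<sigma>} (\<lambda>t. (2 * h t) *\<^sub>R Z t)"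
    by (intro continuous_intros continuous_on_restrict_\<sigma> Z_continuous h_continuous)
  from L2_diff[OF Uperp_L2 L2_continuous[OF this]] show ?thesis by (simp add: D_def[abs_def])
qed

lemma \<psi>_L2: "L2 \<sigma> \<psi>" unfolding \<psi>_def by (rule L2_g[OF D_L2 Z_continuous])

lemma \<psi>_N_integrable: "integrable (lebesgue_on {0..\<sigma>}) (\<lambda>t. \<psi> t / N t)"
  using L2_integrable[OF L2_scaleR_continuous[OF \<psi>_L2 inverse_N_continuous_\<sigma>]] by simp

lemma \<Psi>_continuous: "continuous_on {0..\<sigma>} \<Psi>"
  unfolding \<Psi>_def by (rule indefinite_integral_continuous_real[OF \<psi>_N_integrable])

lemma W_L2: "L2 \<sigma> W"
proof -
  have "continuous_on {0..\<sigma>} (\<lambda>t. (2 * \<Psi> t) *\<^sub>R Y t)"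
    by (intro continuous_intros continuous_on_restrict_\<sigma> cY \<Psi>_continuous)
  from L2_add[OF D_L2 L2_continuous[OF this]] show ?thesis by (simp add: W_def[abs_def])
qed


context
  fixes t :: real assumes t: "t \<in> {0..1}"
begin

lemma N_t_nonzero: "N t \<noteq> 0" using N_nonzero t by simp

lemma Uperp_orthogonal: "g (Uperp t) (Y t) = 0"
  unfolding Uperp_def \<alpha>_def uY_def using N_t_nonzero by (simp add: g_simps N_def[symmetric])

lemma Z_orthogonal: "g (Z t) (Y t) = 0"
  unfolding Z_def \<gamma>_def using N_t_nonzero by (simp add: g_simps N_def[symmetric])

lemma D_orthogonal: "g (D t) (Y t) = 0"
  unfolding D_def by (simp add: g_simps Uperp_orthogonal Z_orthogonal)

lemma D_Y': "g (D t) (Y' t) = \<psi> t"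
proof -
  have "Y' t = Z t + \<gamma> t *\<^sub>R Y t" unfolding Z_def by simp
  then show ?thesis by (simp add: g_simps D_orthogonal \<psi>_def)
qed

lemma W_Y: "g (W t) (Y t) = 2 * \<Psi> t * N t"
  unfolding W_def by (simp add: g_simps D_orthogonal N_def)

lemma W_Y': "g (W t) (Y' t) = \<psi> t + 2 * \<Psi> t * g (Y' t) (Y t)"
  unfolding W_def by (simp add: g_simps D_Y' sym[of "Y t" "Y' t"])

lemma U_decomposition: "U t = h' t *\<^sub>R Y t + (2 * h t) *\<^sub>R Y' t + D t"
  unfolding h'_def D_def Uperp_def Z_def by (simp add: algebra_simps)

lemma U_W: "g (U t) (W t) = g (D t) (D t) + 2 * h t * \<psi> t + 2 * uY t * \<Psi> t"
proof -
  have U: "U t = \<alpha> t *\<^sub>R Y t + D t + (2 * h t) *\<^sub>R Z t" unfolding D_def Uperp_def by simp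
  have "g (U t) (W t) = g (U t) (D t) + 2 * \<Psi> t * uY t" unfolding W_def uY_def by (simp add: g_simps)
  also have "g (U t) (D t) = g (D t) (D t) + 2 * h t * \<psi> t"
    unfolding U \<psi>_def using D_orthogonal by (simp add: g_simps sym[of "Y t" "D t"] sym[of "Z t" "D t"])
  finally show ?thesis by (simp add: algebra_simps)
qed

text \<open>Where \<open>D\<close> vanishes, \<open>V = R U = h' A[Y] + 2 h A[Y']\<close> since \<open>A = R\<close>.\<close>
lemma V_of_D: "D t = 0 \<Longrightarrow> V t = h' t *\<^sub>R A t (Y t) + (2 * h t) *\<^sub>R A t (Y' t)"
proof -
  assume "D t = 0"
  have "V t = R t (U t)" unfolding U_def by (simp add: R_involution[OF t])
  also have "U t = h' t *\<^sub>R Y t + (2 * h t) *\<^sub>R Y' t"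
    using U_decomposition \<open>D t = 0\<close> by simp
  finally have "V t = R t (h' t *\<^sub>R Y t + (2 * h t) *\<^sub>R Y' t)" .
  then show ?thesis by (simp add: R_linear A_eq_R[OF t])
qed

end

text \<open>\<open>h = (c + K)/N\<close> with \<open>K' = g(U,Y) = \<alpha> N\<close> and \<open>N' = 2 \<gamma> N\<close>, so \<open>h' = \<alpha> - 2 \<gamma> h\<close> by the
  product rule for \<open>1/N\<close> and \<open>K\<close>.\<close>
lemma h_H1: "H1 \<sigma> h h'"
  unfolding H1_def
proof (intro conjI h'_L2 ballI)
  fix t assume tS: "t \<in> {0..\<sigma>}"
  have t: "t \<in> {0..1}" using in_unit_interval[OF tS] .
  define P where "P u = 1 / N u" for u
  define P' where "P' u = - 2 * g (Y' u) (Y u) / (N u)\<^sup>2" for u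
  note dP = inverse_N_derivative[folded P_def P'_def]
    and cP' = inverse_N_derivative_continuous[folded P'_def]
  have "integral\<^sup>L (lebesgue_on {0..t}) h'
      = integral\<^sup>L (lebesgue_on {0..t}) (\<lambda>u. (P' u * K u + P u * uY u) + c * P' u)"
  proof (rule Bochner_Integration.integral_cong[OF refl])
    fix u assume "u \<in> space (lebesgue_on {0..t})"
    then have "N u \<noteq> 0" using t N_nonzero by auto
    then show "h' u = (P' u * K u + P u * uY u) + c * P' u"
      unfolding h'_def \<alpha>_def \<gamma>_def h_def P_def P'_def by (simp add: field_simps power2_eq_square)
  qed
  also have "\<dots> = P t * K t + c * (P t - P 0)"
  proof -
    have "continuous_on {0..t} P'" using t by (intro continuous_on_subset[OF cP']) auto
    then show ?thesis
      using integral_product_rule[OF dP cP' uY_integrable \<sigma>_bounds(2) tS]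
        integral_Icc_derivative[OF dP cP' t] unfolding K_def
      by (simp add: continuous_imp_integrable_real)
  qed
  also have "\<dots> = h t - h 0"
  proof -
    have "K 0 = 0" unfolding K_def by (rule integral_eq_zero_null_sets) simp
    then show ?thesis
      using N_nonzero[OF t] N_nonzero[of 0] unfolding h_def P_def by (simp add: field_simps)
  qed
  finally show "h t = h 0 + integral\<^sup>L (lebesgue_on {0..t}) h'" by simp
qed


text \<open>\<open>g(W,Y') = N \<cdot> (\<psi>/N) + N' \<Psi>\<close>, so by the product rule \<open>\<integral>\<^sub>0\<^sup>t g(W,Y') = N(t) \<Psi>(t)\<close>.\<close>
lemma W_Y'_primitive:
  assumes tS: "t \<in> {0..\<sigma>}"
  shows "integral\<^sup>L (lebesgue_on {0..t}) (\<lambda>s. g (W s) (Y' s)) = N t * \<Psi> t"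
proof -
  have "integral\<^sup>L (lebesgue_on {0..t}) (\<lambda>s. g (W s) (Y' s))
      = integral\<^sup>L (lebesgue_on {0..t}) (\<lambda>u. 2 * g (Y' u) (Y u) * \<Psi> u + N u * (\<psi> u / N u))"
  proof (rule Bochner_Integration.integral_cong[OF refl])
    fix u assume "u \<in> space (lebesgue_on {0..t})"
    then have u: "u \<in> {0..1}" using in_unit_interval[OF tS] by auto
    show "g (W u) (Y' u) = 2 * g (Y' u) (Y u) * \<Psi> u + N u * (\<psi> u / N u)"
      using W_Y'[OF u] N_nonzero[OF u] by simp
  qed
  also have "\<dots> = N t * \<Psi> t"
    using integral_product_rule(2)[OF N_derivative N_derivative_continuous \<psi>_N_integrable
        \<sigma>_bounds(2) tS]
    unfolding \<Psi>_def by simp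
  finally show ?thesis .
qed

text \<open>The value \<open>\<Psi>(\<sigma>)\<close> is affine in the constant \<open>c\<close> of \<open>h\<close>: \<open>\<psi>/N = F - 2 c \<zeta>\<close> pointwise.\<close>
lemma \<Psi>_\<sigma>_affine: "\<Psi> \<sigma> = c_num - 2 * c * c_den"
proof -
  let ?M = "lebesgue_on {0..\<sigma>}"
  define F where "F u = g (Uperp u) (Z u) / N u - 2 * K u * \<zeta> u" for u
  have pointwise: "\<psi> u / N u = F u - 2 * c * \<zeta> u" if u: "u \<in> {0..1}" for u
  proof -
    have "\<psi> u = g (Uperp u) (Z u) - 2 * h u * g (Z u) (Z u)"
      unfolding \<psi>_def D_def by (simp add: g_simps)
    then have "\<psi> u / N u = g (Uperp u) (Z u) / N u - 2 * (c + K u) * \<zeta> u"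
      unfolding h_def \<zeta>_def by (simp add: power2_eq_square diff_divide_distrib)
    then show ?thesis unfolding F_def by (simp add: algebra_simps)
  qed
  have \<zeta>i: "integrable ?M \<zeta>"
    by (rule continuous_imp_integrable_real[OF continuous_on_restrict_\<sigma>[OF \<zeta>_continuous]])
  have "integrable ?M (\<lambda>u. F u - 2 * c * \<zeta> u)"
    using \<psi>_N_integrable pointwise in_unit_interval
    by (subst Bochner_Integration.integrable_cong[OF refl, where g="\<lambda>u. \<psi> u / N u"]) auto
  from Bochner_Integration.integrable_add[OF this integrable_mult_right[OF \<zeta>i, of "2 * c"]]
  have Fi: "integrable ?M F" by simp
  have "\<Psi> \<sigma> = integral\<^sup>L ?M (\<lambda>u. F u - 2 * c * \<zeta> u)"
    unfolding \<Psi>_def using pointwise in_unit_interval by (intro Bochner_Integration.integral_cong) auto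
  also have "\<dots> = integral\<^sup>L ?M F - 2 * c * c_den" using Fi \<zeta>i unfolding c_den_def by simp
  finally show ?thesis unfolding c_num_def F_def .
qed

text \<open>If \<open>c_den = \<integral> g(Z,Z)/N\<^sup>2 = 0\<close>, the spacelike \<open>Z\<close> vanishes almost everywhere, hence so does \<open>\<psi>\<close>.\<close>
lemma \<Psi>_\<sigma>_degenerate:
  assumes "c_den = 0"
  shows "\<Psi> \<sigma> = 0"
proof -
  let ?M = "lebesgue_on {0..\<sigma>}"
  have \<zeta>i: "integrable ?M \<zeta>"
    by (rule continuous_imp_integrable_real[OF continuous_on_restrict_\<sigma>[OF \<zeta>_continuous]])
  have "AE u in ?M. 0 \<le> \<zeta> u"
    using AE_lebesgue_on_mem[of "{0..\<sigma>}"]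
    by eventually_elim
      (auto simp: \<zeta>_def intro!: divide_nonneg_nonneg
        orthogonal_Y_nonneg[OF in_unit_interval Z_orthogonal[OF in_unit_interval]])
  then have "AE u in ?M. \<zeta> u = 0"
    using integral_nonneg_eq_0_iff_AE[OF \<zeta>i] assms unfolding c_den_def by simp
  then have "AE u in ?M. \<psi> u / N u = 0"
    using AE_lebesgue_on_mem[of "{0..\<sigma>}"]
  proof eventually_elim
    case (elim u)
    then have u: "u \<in> {0..1}" using in_unit_interval by auto
    then have "g (Z u) (Z u) = 0" using N_nonzero[OF u] elim(1) unfolding \<zeta>_def by simp
    then have "Z u = 0" using orthogonal_Y_spacelike[OF u Z_orthogonal[OF u]] by force
    then show ?case unfolding \<psi>_def by (simp add: g_simps)
  qed
  then show ?thesis unfolding \<Psi>_def by (rule integral_eq_zero_AE)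
qed

lemma \<Psi>_\<sigma>: "\<Psi> \<sigma> = 0"
  using \<Psi>_\<sigma>_affine \<Psi>_\<sigma>_degenerate unfolding c_def by (cases "c_den = 0") (simp_all add: field_simps)

text \<open>Hence \<open>W\<close> satisfies both defining conditions of \<open>K\<^sub>0(\<sigma>)\<close>: \<open>g(W,Y) = 2 N \<Psi> = 2 \<integral> g(W,Y')\<close> and \<open>\<Psi>(\<sigma>) = 0\<close>.\<close>
lemma W_in_K0: "W \<in> K0 g Y Y' \<sigma>"
  unfolding K0_def mem_Collect_eq
proof (intro conjI W_L2 AE_I2)
  fix t assume "t \<in> space (lebesgue_on {0..\<sigma>})"
  then have tS: "t \<in> {0..\<sigma>}" by simp
  show "g (W t) (Y t) = 2 * integral\<^sup>L (lebesgue_on {0..t}) (\<lambda>s. g (W s) (Y' s))"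
    using W_Y[OF in_unit_interval[OF tS]] W_Y'_primitive[OF tS] by simp
next
  show "integral\<^sup>L (lebesgue_on {0..\<sigma>}) (\<lambda>s. g (W s) (Y' s)) = 0"
    using W_Y'_primitive[of \<sigma>] \<sigma>_bounds \<Psi>_\<sigma> by simp
qed

lemma D_D_integrable: "integrable (lebesgue_on {0..\<sigma>}) (\<lambda>t. g (D t) (D t))"
proof -
  obtain C where C: "\<And>x y. norm (g x y) \<le> norm x * norm y * C"
    using bounded_bilinear.bounded[OF bounded_bilinear_g] by blast
  show ?thesis
  proof (rule Bochner_Integration.integrable_bound)
    show "integrable (lebesgue_on {0..\<sigma>}) (\<lambda>t. C * (norm (D t))\<^sup>2)"
      using D_L2 unfolding L2_def by simp
    show "(\<lambda>t. g (D t) (D t)) \<in> borel_measurable (lebesgue_on {0..\<sigma>})"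
      using L2_measurable[OF D_L2] by measurable
    show "AE t in lebesgue_on {0..\<sigma>}. norm (g (D t) (D t)) \<le> norm (C * (norm (D t))\<^sup>2)"
      using C by (intro AE_I2) (smt (verit) power2_eq_square real_norm_def mult.commute)
  qed
qed

text \<open>The cross terms of \<open>g(U,W)\<close> integrate to zero: with \<open>h = (c + K)/N\<close> they equal
  \<open>2(g(U,Y) \<Psi> + (c + K) \<psi>/N)\<close>, the derivative of \<open>2 (c + K) \<Psi>\<close>, which vanishes at \<open>0\<close> and \<open>\<sigma>\<close>.\<close>
lemma cross_terms_vanish:
  "integral\<^sup>L (lebesgue_on {0..\<sigma>}) (\<lambda>t. 2 * h t * \<psi> t + 2 * uY t * \<Psi> t) = 0"
proof -
  let ?M = "lebesgue_on {0..\<sigma>}"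
  have "integral\<^sup>L ?M (\<lambda>t. 2 * h t * \<psi> t + 2 * uY t * \<Psi> t)
      = integral\<^sup>L ?M (\<lambda>t. 2 * (uY t * \<Psi> t + (c + K t) * (\<psi> t / N t)))"
    using N_nonzero in_unit_interval
    by (intro Bochner_Integration.integral_cong) (auto simp: h_def field_simps)
  also have "\<dots> = 2 * ((c + K \<sigma>) * \<Psi> \<sigma>)"
    using integral_product_of_primitives[OF uY_integrable \<psi>_N_integrable, of c]
    unfolding \<Psi>_def K_def by (simp only: integral_mult_right_zero)
  finally show ?thesis using \<Psi>_\<sigma> by simp
qed

lemma Rsig_V_W: "Rsig g Y \<sigma> V W = integral\<^sup>L (lebesgue_on {0..\<sigma>}) (\<lambda>t. g (D t) (D t))"
proof -
  let ?M = "lebesgue_on {0..\<sigma>}"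
  have "integrable ?M (\<lambda>t. 2 * h t * \<psi> t + 2 * uY t * \<Psi> t)"
  proof (intro Bochner_Integration.integrable_add)
    show "integrable ?M (\<lambda>t. 2 * h t * \<psi> t)"
      using integrable_mult_continuous[OF L2_integrable[OF \<psi>_L2] h_continuous]
      by (simp add: mult.commute mult.left_commute)
    show "integrable ?M (\<lambda>t. 2 * uY t * \<Psi> t)"
      using integrable_mult_continuous[OF uY_integrable \<Psi>_continuous] by (simp add: mult.assoc)
  qed
  moreover have "Rsig g Y \<sigma> V W
      = integral\<^sup>L ?M (\<lambda>t. g (D t) (D t) + (2 * h t * \<psi> t + 2 * uY t * \<Psi> t))"
    unfolding Rsig_def
  proof (rule Bochner_Integration.integral_cong[OF refl])
    fix t assume "t \<in> space ?M"
    then have t: "t \<in> {0..1}" using in_unit_interval by auto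
    show "gr g Y t (V t) (W t) = g (D t) (D t) + (2 * h t * \<psi> t + 2 * uY t * \<Psi> t)"
      using U_W[OF t] unfolding gr_eq_R U_def by simp
  qed
  ultimately show ?thesis using D_D_integrable cross_terms_vanish by simp
qed

text \<open>Since \<open>D\<close> is pointwise orthogonal to the timelike \<open>Y\<close>, \<open>g(D,D) \<ge> 0\<close> with equality only
  where \<open>D = 0\<close>; its integral vanishes by orthogonality of \<open>V\<close> to \<open>W \<in> K\<^sub>0(\<sigma>)\<close>.\<close>
lemma D_vanishes: "AE t in lebesgue_on {0..\<sigma>}. D t = 0"
proof -
  let ?M = "lebesgue_on {0..\<sigma>}"
  have "integral\<^sup>L ?M (\<lambda>t. g (D t) (D t)) = 0"
    using V_orthogonal W_in_K0 Rsig_V_W by simp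
  moreover have "AE t in ?M. 0 \<le> g (D t) (D t)"
    using AE_lebesgue_on_mem[of "{0..\<sigma>}"]
    by eventually_elim (use orthogonal_Y_nonneg D_orthogonal in_unit_interval in blast)
  ultimately have "AE t in ?M. g (D t) (D t) = 0"
    using integral_nonneg_eq_0_iff_AE[OF D_D_integrable] by simp
  then show ?thesis
    using AE_lebesgue_on_mem[of "{0..\<sigma>}"]
    by eventually_elim (use orthogonal_Y_spacelike D_orthogonal in_unit_interval in fastforce)
qed

lemma orthogonal_field_is_gradient:
  "\<exists>h h'. H1 \<sigma> h h' \<and>
     (AE t in lebesgue_on {0..\<sigma>}. V t = h' t *\<^sub>R A t (Y t) + (2 * h t) *\<^sub>R A t (Y' t))"
proof -
  have "AE t in lebesgue_on {0..\<sigma>}. V t = h' t *\<^sub>R A t (Y t) + (2 * h t) *\<^sub>R A t (Y' t)"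
    using D_vanishes AE_lebesgue_on_mem[of "{0..\<sigma>}"]
    by eventually_elim (auto intro: V_of_D[OF in_unit_interval])
  with h_H1 show ?thesis by blast
qed

end

theorem mainTheorem19:
  fixes g :: "'a::euclidean_space \<Rightarrow> 'a \<Rightarrow> real"
    and Y Y' Y'' :: "real \<Rightarrow> 'a"
    and A :: "real \<Rightarrow> 'a \<Rightarrow> 'a"
    and \<sigma> :: real
  assumes g: "nondeg_sym_bilinear g" and idx: "form_index g = 1"
    and dY: "\<forall>t\<in>{0..1}. (Y has_vector_derivative Y' t) (at t within {0..1})"
    and dY': "\<forall>t\<in>{0..1}. (Y' has_vector_derivative Y'' t) (at t within {0..1})"
    and cY'': "continuous_on {0..1} Y''"
    and timelike: "\<forall>t\<in>{0..1}. g (Y t) (Y t) < 0"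
    and A: "\<forall>t\<in>{0..1}. \<forall>V W. g V W = gr g Y t (A t V) W"
    and \<sigma>: "\<sigma> \<in> {0<..1}"
  shows "{V. L2 \<sigma> V \<and> (\<forall>W\<in>K0 g Y Y' \<sigma>. Rsig g Y \<sigma> V W = 0)} =
         {V. L2 \<sigma> V \<and> (\<exists>h h'. H1 \<sigma> h h' \<and>
               (AE t in lebesgue_on {0..\<sigma>}.
                  V t = h' t *\<^sub>R A t (Y t) + (2 * h t) *\<^sub>R A t (Y' t)))}"
proof -
  have "continuous_on {0..1} Y'"
    using dY' by (intro continuous_on_vector_derivative) auto
  then interpret timelike_curve g Y Y' A \<sigma>
    using g idx dY timelike A \<sigma> by unfold_locales
  show ?thesis
  proof (intro equalityI subsetI)
    fix V assume "V \<in> {V. L2 \<sigma> V \<and> (\<forall>W\<in>K0 g Y Y' \<sigma>. Rsig g Y \<sigma> V W = 0)}"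
    then interpret orthogonal_field g Y Y' A \<sigma> V by unfold_locales auto
    show "V \<in> {V. L2 \<sigma> V \<and> (\<exists>h h'. H1 \<sigma> h h' \<and>
        (AE t in lebesgue_on {0..\<sigma>}. V t = h' t *\<^sub>R A t (Y t) + (2 * h t) *\<^sub>R A t (Y' t)))}"
      using V_L2 orthogonal_field_is_gradient by blast
  next
    fix V assume "V \<in> {V. L2 \<sigma> V \<and> (\<exists>h h'. H1 \<sigma> h h' \<and>
        (AE t in lebesgue_on {0..\<sigma>}. V t = h' t *\<^sub>R A t (Y t) + (2 * h t) *\<^sub>R A t (Y' t)))}"
    then show "V \<in> {V. L2 \<sigma> V \<and> (\<forall>W\<in>K0 g Y Y' \<sigma>. Rsig g Y \<sigma> V W = 0)}"
      using gradient_field_orthogonal by blast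
  qed
qed

end
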